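(* Assume (STAB). There exist constants $\lambda_{d,R}$ ($R>2$) such that $$\langle\delta^2E(\hat y+\Pi_Ru)v,v\rangle\ge\lambda_{d,R}\|Dv\|_{\ell^2}^2\qquad\text{for all }v\in\mathscr W_0(\Lambda),$$ and $\lambda_{d,R}\to\lambda_d>0$ as $R\to\infty$.
   Context: Lattice $\Lambda:=\tfrac{a_1+a_2}{3}+\{ma_1+na_2:m,n\in\mathbb Z\}$, $a_1=(1,0)^T$, $a_2=(\tfrac12,\tfrac{\sqrt3}2)^T$; bonds $\mathcal B$ oriented nearest-neighbour pairs; cells: triangles of mutually nearest-neighbour lattice points; $C_0$ the cell with barycentre $0$. $Dy_b:=y(\eta)-y(\xi)$; $\xi_0=(0,\sqrt3/3)^T$; $\mathscr W_0(\Lambda)=\{v:v(\xi_0)=0,\mathrm{supp}(Dv)\text{ bounded}\}$; $\dot{\mathscr W}^{1,2}(\Lambda)=\{v:v(\xi_0)=0,Dv\in\ell^2(\mathcal B)\}$. $\psi\in C^4(\mathbb R)$, $1$-periodic, even; $E(y;\tilde y):=\sum_{b\in\mathcal B}[\psi(Dy_b)-\psi(D\tilde y_b)]$; $\langle\delta^2E(y)v,w\rangle:=\sum_b\psi''(Dy_b)Dv_bDw_b$. $\hat y(x)=\frac1{2\pi}\arg(x)$ (branch cut on positive $x_1$-axis). (STAB): there is $u\in\dot{\mathscr W}^{1,2}(\Lambda)$ such that $\hat y+u$ is a strongly stable equilibrium of $E$ (locally minimal among perturbations $w\in\mathscr W_0(\Lambda)$ with small $\|Dw\|_{\ell^2}$,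 and $\langle\delta^2E(\hat y+u)v,v\rangle\ge\lambda_d\|Dv\|_{\ell^2}^2$ for all $v\in\mathscr W_0(\Lambda)$, with $\lambda_d>0$ fixed). Truncation: $\eta\in C^1(\mathbb R^2)$ with $\eta=1$ on $|x|\le\frac34$, $\eta=0$ on $|x|\ge1$; $Iu$ the piecewise affine interpolant of $u$ over the cells; $A_R:=B_R(0)\setminus B_{R/2+1}(0)$; $\Pi_Ru(\xi):=\eta(\xi/R)(u(\xi)-a_R)$ with $a_R$ the average of $Iu$ over $A_R$. *)

theory Defs
  imports "HOL-Analysis.Analysis"
begin

text \<open>Points of R^2 are represented as complex numbers: (x1,x2) corresponds to x1 + i x2.\<close>

definition a1 :: complex where "a1 = Complex 1 0"
definition a2 :: complex where "a2 = Complex (1/2) (sqrt 3 / 2)"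

definition Lat :: "complex set" where
  "Lat = {(a1 + a2) / 3 + of_int m * a1 + of_int n * a2 | m n. True}"

definition Bonds :: "(complex \<times> complex) set" where
  "Bonds = {(xi, eta). xi \<in> Lat \<and> eta \<in> Lat \<and> dist xi eta = 1}"

definition Dif :: "(complex \<Rightarrow> real) \<Rightarrow> complex \<times> complex \<Rightarrow> real" where
  "Dif y b = y (snd b) - y (fst b)"

definition xi0 :: complex where "xi0 = Complex 0 (sqrt 3 / 3)"

definition W0 :: "(complex \<Rightarrow> real) set" where
  "W0 = {v. v xi0 = 0 \<and> bounded {b \<in> Bonds. Dif v b \<noteq> 0}}"

definition W12 :: "(complex \<Rightarrow> real) set" where
  "W12 = {v. v xi0 = 0 \<and> (\<lambda>b. (Dif v b)\<^sup>2) summable_on Bonds}"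

definition normD2 :: "(complex \<Rightarrow> real) \<Rightarrow> real" where
  "normD2 v = (\<Sum>\<^sub>\<infinity> b\<in>Bonds. (Dif v b)\<^sup>2)"

definition C_k :: "nat \<Rightarrow> (real \<Rightarrow> real) \<Rightarrow> bool" where
  "C_k k f \<longleftrightarrow> (\<forall>j<k. \<forall>x. (deriv ^^ j) f differentiable (at x))
                 \<and> continuous_on UNIV ((deriv ^^ k) f)"

definition Energy :: "(real \<Rightarrow> real) \<Rightarrow> (complex \<Rightarrow> real) \<Rightarrow> (complex \<Rightarrow> real) \<Rightarrow> real" where
  "Energy \<psi> y y' = (\<Sum>\<^sub>\<infinity> b\<in>Bonds. \<psi> (Dif y b) - \<psi> (Dif y' b))"

definition hess :: "(real \<Rightarrow> real) \<Rightarrow> (complex \<Rightarrow> real) \<Rightarrow> (complex \<Rightarrow> real) \<Rightarrow> (complex \<Rightarrow> real) \<Rightarrow> real" where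
  "hess \<psi> y v w = (\<Sum>\<^sub>\<infinity> b\<in>Bonds. (deriv ^^ 2) \<psi> (Dif y b) * Dif v b * Dif w b)"

definition yhat :: "complex \<Rightarrow> real" where
  "yhat x = Arg2pi x / (2 * pi)"

definition strongly_stable :: "(real \<Rightarrow> real) \<Rightarrow> real \<Rightarrow> (complex \<Rightarrow> real) \<Rightarrow> bool" where
  "strongly_stable \<psi> lam y \<longleftrightarrow>
     (\<exists>\<epsilon>>0. \<forall>w\<in>W0. sqrt (normD2 w) < \<epsilon> \<longrightarrow> Energy \<psi> (\<lambda>x. y x + w x) y \<ge> 0)
   \<and> (\<forall>v\<in>W0. hess \<psi> y v v \<ge> lam * normD2 v)"

definition is_cell :: "complex \<Rightarrow> complex \<Rightarrow> complex \<Rightarrow> bool" where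
  "is_cell p q r \<longleftrightarrow> p \<in> Lat \<and> q \<in> Lat \<and> r \<in> Lat
      \<and> dist p q = 1 \<and> dist q r = 1 \<and> dist p r = 1"

text \<open>Piecewise affine interpolant over the cells (barycentric interpolation;
  well defined since adjacent cells agree on shared edges).\<close>
definition interp :: "(complex \<Rightarrow> real) \<Rightarrow> complex \<Rightarrow> real" where
  "interp u x = (SOME val. \<exists>p q r \<alpha> \<beta> \<gamma>. is_cell p q r \<and> \<alpha> \<ge> 0 \<and> \<beta> \<ge> 0 \<and> \<gamma> \<ge> 0
       \<and> \<alpha> + \<beta> + \<gamma> = 1 \<and> x = of_real \<alpha> * p + of_real \<beta> * q + of_real \<gamma> * r
       \<and> val = \<alpha> * u p + \<beta> * u q + \<gamma> * u r)"

definition annulus :: "real \<Rightarrow> complex set" where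
  "annulus R = ball 0 R - ball 0 (R / 2 + 1)"

definition avgR :: "real \<Rightarrow> (complex \<Rightarrow> real) \<Rightarrow> real" where
  "avgR R u = integral (annulus R) (interp u) / Henstock_Kurzweil_Integration.content (annulus R)"

definition truncR :: "(complex \<Rightarrow> real) \<Rightarrow> real \<Rightarrow> (complex \<Rightarrow> real) \<Rightarrow> complex \<Rightarrow> real" where
  "truncR \<eta> R u xi = \<eta> (xi / of_real R) * (u xi - avgR R u)"

definition cutoff :: "(complex \<Rightarrow> real) \<Rightarrow> bool" where
  "cutoff \<eta> \<longleftrightarrow> (\<exists>\<eta>'. (\<forall>x. (\<eta> has_derivative blinfun_apply (\<eta>' x)) (at x)) \<and> continuous_on UNIV \<eta>')
     \<and> (\<forall>x. norm x \<le> 3/4 \<longrightarrow> \<eta> x = 1) \<and> (\<forall>x. norm x \<ge> 1 \<longrightarrow> \<eta> x = 0)"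

end

theory Submission
  imports Defs "HOL-Real_Asymp.Real_Asymp"
begin

text \<open>
  The Hessians at \<open>\<hat>y + \<Pi>\<^sub>R u\<close> and at \<open>\<hat>y + u\<close> differ only in the coefficients
  \<open>\<psi>''(Dy\<^sub>b)\<close>. It therefore suffices that \<open>D(\<Pi>\<^sub>R u) \<rightarrow> Du\<close> uniformly on the bonds: the bond
  values then stay in a compact interval, uniform continuity of \<open>\<psi>''\<close> makes the largest
  coefficient change \<open>\<omega>\<^sub>R\<close> tend to 0, and \<open>\<lambda>\<^sub>d - \<omega>\<^sub>R\<close> is a stability constant.
  On a bond \<open>(\<xi>, \<zeta>)\<close> the error is
  \<open>(\<eta>(\<zeta>/R) - 1) Du\<^sub>b + (\<eta>(\<zeta>/R) - \<eta>(\<xi>/R)) (u(\<xi>) - a\<^sub>R)\<close>.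
  The first term vanishes for \<open>|\<zeta>| \<le> 3R/4\<close> and is small beyond, since \<open>Du \<in> \<ell>\<^sup>2\<close> is small
  far out. The second is \<open>O(R\<^sup>-\<^sup>1 R\<^sup>1\<^sup>/\<^sup>2)\<close>: \<open>\<eta>\<close> is Lipschitz, and a lattice function of finite
  energy grows at most like the square root of the distance (Cauchy--Schwarz along lattice
  lines), which bounds both \<open>u(\<xi>)\<close> and the annular average \<open>a\<^sub>R\<close> by \<open>O(R\<^sup>1\<^sup>/\<^sup>2)\<close>.
\<close>

section \<open>Lattice geometry\<close>

definition Lat_origin :: complex where "Lat_origin = (a1 + a2) / 3"

lemma Lat_iff: "p \<in> Lat \<longleftrightarrow> (\<exists>m n. p = Lat_origin + of_int m * a1 + of_int n * a2)"
  unfolding Lat_def Lat_origin_def by auto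

lemma Lat_origin_in_Lat: "Lat_origin \<in> Lat"
  unfolding Lat_iff by (rule exI[of _ 0], rule exI[of _ 0]) simp

lemma Lat_add_a1: "p \<in> Lat \<Longrightarrow> p + of_int k * a1 \<in> Lat"
  unfolding Lat_iff
  by (clarsimp, rule_tac x="m + k" in exI, rule_tac x=n in exI, simp add: algebra_simps)

lemma Lat_add_a2: "p \<in> Lat \<Longrightarrow> p + of_int k * a2 \<in> Lat"
  unfolding Lat_iff
  by (clarsimp, rule_tac x=m in exI, rule_tac x="n + k" in exI, simp add: algebra_simps)

lemma norm_a1 [simp]: "norm a1 = 1"
  by (simp add: a1_def cmod_def)

lemma norm_a2 [simp]: "norm a2 = 1"
  by (simp add: a2_def cmod_def power_divide)

lemma Lat_coordinates_bound:
  assumes "p = Lat_origin + of_int m * a1 + of_int n * a2"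
  shows "\<bar>real_of_int m\<bar> \<le> 2 * (norm p + 1)" and "\<bar>real_of_int n\<bar> \<le> 2 * (norm p + 1)"
proof -
  have re: "Re p = 1/2 + m + n/2" and im: "Im p = sqrt 3 / 6 + n * (sqrt 3 / 2)"
    using assms by (simp_all add: Lat_origin_def a1_def a2_def)
  have Re: "\<bar>Re p\<bar> \<le> norm p" and Im: "\<bar>Im p\<bar> \<le> norm p"
    by (rule abs_Re_le_cmod, rule abs_Im_le_cmod)
  have "sqrt 3 \<le> 2"
    by (smt (verit) real_sqrt_le_mono real_sqrt_four)
  have "\<bar>real_of_int n\<bar> * (1/2) \<le> \<bar>real_of_int n\<bar> * (sqrt 3 / 2)"
    by (intro mult_left_mono) auto
  also have "\<dots> = \<bar>Im p - sqrt 3 / 6\<bar>"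
    by (simp add: im abs_mult)
  also have "\<dots> \<le> \<bar>Im p\<bar> + sqrt 3 / 6"
    using abs_triangle_ineq4[of "Im p" "sqrt 3 / 6"] by simp
  also have "\<dots> \<le> norm p + 1"
    using Im \<open>sqrt 3 \<le> 2\<close> by linarith
  finally show n: "\<bar>real_of_int n\<bar> \<le> 2 * (norm p + 1)"
    by simp
  show "\<bar>real_of_int m\<bar> \<le> 2 * (norm p + 1)"
  proof (rule abs_leI)
    have "Re p \<le> norm p" "- Re p \<le> norm p"
      and "real_of_int n \<le> 2 * (norm p + 1)" "- real_of_int n \<le> 2 * (norm p + 1)"
      using Re n by (simp_all add: abs_le_iff)
    then show "real_of_int m \<le> 2 * (norm p + 1)" and "- real_of_int m \<le> 2 * (norm p + 1)"
      using re by auto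
  qed

qed

lemma finite_Lat_inter_cball: "finite (Lat \<inter> cball 0 r)"
proof -
  define K where "K = \<lceil>2 * (r + 1)\<rceil>"
  define lat where "lat = (\<lambda>(m, n). Lat_origin + of_int m * a1 + of_int n * a2)"
  have "Lat \<inter> cball 0 r \<subseteq> lat ` ({-K..K} \<times> {-K..K})"
  proof
    fix p assume p: "p \<in> Lat \<inter> cball 0 r"
    then obtain m n where e: "p = Lat_origin + of_int m * a1 + of_int n * a2"
      using Lat_iff by blast
    have "norm p \<le> r"
      using p by auto
    then have "\<bar>real_of_int m\<bar> \<le> 2 * (r + 1)" "\<bar>real_of_int n\<bar> \<le> 2 * (r + 1)"
      using Lat_coordinates_bound[OF e] by auto
    then have "\<bar>m\<bar> \<le> K" "\<bar>n\<bar> \<le> K"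
      unfolding K_def by linarith+
    then show "p \<in> lat ` ({-K..K} \<times> {-K..K})"
      using e unfolding lat_def by (auto intro!: image_eqI[of _ _ "(m, n)"])
  qed
  then show ?thesis
    by (rule finite_subset) auto
qed

lemma finite_bounded_subset_Bonds:
  assumes "bounded X" "X \<subseteq> Bonds"
  shows "finite X"
proof -
  obtain r where r: "\<And>b. b \<in> X \<Longrightarrow> norm b \<le> r"
    using assms(1) bounded_iff by blast
  have "X \<subseteq> (Lat \<inter> cball 0 r) \<times> (Lat \<inter> cball 0 r)"
  proof (clarify)
    fix x y assume b: "(x, y) \<in> X"
    have "norm x \<le> r" "norm y \<le> r"
      using r[OF b] norm_fst_le[of x y] norm_snd_le[of y x] by auto
    then show "x \<in> Lat \<inter> cball 0 r \<and> y \<in> Lat \<inter> cball 0 r"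
      using b assms(2) by (auto simp: Bonds_def)
  qed
  then show ?thesis
    by (rule finite_subset) (intro finite_cartesian_product finite_Lat_inter_cball)
qed

lemma finite_support_W0: "v \<in> W0 \<Longrightarrow> finite {b \<in> Bonds. Dif v b \<noteq> 0}"
  unfolding W0_def by (rule finite_bounded_subset_Bonds) auto

section \<open>Growth of lattice functions of finite energy\<close>

lemma normD2_nonneg: "normD2 u \<ge> 0"
  unfolding normD2_def by (rule infsum_nonneg) simp

lemma sum_Dif_sq_le_normD2:
  assumes "(\<lambda>b. (Dif u b)\<^sup>2) summable_on Bonds" "finite F" "F \<subseteq> Bonds"
  shows "(\<Sum>b\<in>F. (Dif u b)\<^sup>2) \<le> normD2 u"
  unfolding normD2_def by (rule finite_sum_le_infsum[OF assms]) auto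

lemma abs_Dif_le_sqrt_normD2:
  assumes "(\<lambda>b. (Dif u b)\<^sup>2) summable_on Bonds" "b \<in> Bonds"
  shows "\<bar>Dif u b\<bar> \<le> sqrt (normD2 u)"
  using sum_Dif_sq_le_normD2[OF assms(1), of "{b}"] assms(2) real_le_rsqrt by auto

lemma Dif_walk_estimate:
  assumes sum: "(\<lambda>b. (Dif u b)\<^sup>2) summable_on Bonds" and q: "q \<in> Lat"
    and step: "\<And>p. p \<in> Lat \<Longrightarrow> p + d \<in> Lat" and d: "norm d = 1"
  shows "\<bar>u (q + of_nat N * d) - u q\<bar> \<le> sqrt (real N) * sqrt (normD2 u)"
proof -
  define pt where "pt k = q + of_nat k * d" for k :: nat
  define bd where "bd k = (pt k, pt (Suc k))" for k
  have pt_Lat: "pt k \<in> Lat" for k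
  proof (induction k)
    case (Suc k)
    have "pt (Suc k) = pt k + d"
      by (simp add: pt_def algebra_simps)
    then show ?case
      using step[OF Suc] by simp
  qed (simp add: pt_def q)
  have bd_Bonds: "bd k \<in> Bonds" for k
    using pt_Lat[of k] pt_Lat[of "Suc k"] d
    by (simp add: bd_def Bonds_def pt_def dist_norm algebra_simps norm_minus_commute)
  have "inj_on bd {..<N}"
    by (rule inj_onI) (use d in \<open>auto simp: bd_def pt_def\<close>)
  have "(u (q + of_nat N * d) - u q)\<^sup>2 = (\<Sum>k<N. Dif u (bd k))\<^sup>2"
    using sum_lessThan_telescope[of "\<lambda>k. u (pt k)" N] by (simp add: Dif_def bd_def pt_def)
  also have "\<dots> \<le> (\<Sum>k<N. (Dif u (bd k))\<^sup>2) * real N"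
    using sum_squared_le_sum_of_squares[of "\<lambda>k. Dif u (bd k)" "{..<N}"] by simp
  also have "(\<Sum>k<N. (Dif u (bd k))\<^sup>2) = (\<Sum>b\<in>bd ` {..<N}. (Dif u b)\<^sup>2)"
    by (simp add: sum.reindex[OF \<open>inj_on bd {..<N}\<close>])
  also have "\<dots> \<le> normD2 u"
    by (rule sum_Dif_sq_le_normD2[OF sum]) (use bd_Bonds in auto)
  finally have "(u (q + of_nat N * d) - u q)\<^sup>2 \<le> normD2 u * real N"
    by (simp add: mult_right_mono)
  then show ?thesis
    using real_sqrt_le_mono by (fastforce simp: real_sqrt_mult mult.commute)
qed

lemma Dif_line_estimate:
  assumes sum: "(\<lambda>b. (Dif u b)\<^sup>2) summable_on Bonds" and q: "q \<in> Lat"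
    and step: "\<And>p k. p \<in> Lat \<Longrightarrow> p + of_int k * d \<in> Lat" and d: "norm d = 1"
  shows "\<bar>u (q + of_int k * d) - u q\<bar> \<le> sqrt \<bar>real_of_int k\<bar> * sqrt (normD2 u)"
proof (cases "k \<ge> 0")
  case True
  have "p + d \<in> Lat" if "p \<in> Lat" for p
    using step[OF that, of 1] by simp
  from Dif_walk_estimate[OF sum q this d, of "nat k"] True show ?thesis
    by simp
next
  case False
  have "p + (- d) \<in> Lat" if "p \<in> Lat" for p
    using step[OF that, of "-1"] by simp
  from Dif_walk_estimate[OF sum q this, of "nat (- k)"] False d show ?thesis
    by simp
qed

lemma Lat_growth_estimate:
  assumes sum: "(\<lambda>b. (Dif u b)\<^sup>2) summable_on Bonds" and xi: "xi \<in> Lat"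
  shows "\<bar>u xi - u Lat_origin\<bar> \<le> 3 * sqrt (norm xi + 1) * sqrt (normD2 u)"
proof -
  obtain m n where e: "xi = Lat_origin + of_int m * a1 + of_int n * a2"
    using xi Lat_iff by blast
  define q where "q = Lat_origin + of_int m * a1"
  have "q \<in> Lat"
    unfolding q_def by (rule Lat_add_a1[OF Lat_origin_in_Lat])
  have "\<bar>u q - u Lat_origin\<bar> \<le> sqrt \<bar>real_of_int m\<bar> * sqrt (normD2 u)"
    unfolding q_def by (rule Dif_line_estimate[OF sum Lat_origin_in_Lat]) (auto intro: Lat_add_a1)
  moreover have "\<bar>u xi - u q\<bar> \<le> sqrt \<bar>real_of_int n\<bar> * sqrt (normD2 u)"
    unfolding e q_def[symmetric]
    by (rule Dif_line_estimate[OF sum \<open>q \<in> Lat\<close>]) (auto intro: Lat_add_a2)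
  moreover have "sqrt \<bar>real_of_int m\<bar> + sqrt \<bar>real_of_int n\<bar> \<le> 3 * sqrt (norm xi + 1)"
  proof -
    have "sqrt \<bar>real_of_int m\<bar> \<le> sqrt 2 * sqrt (norm xi + 1)"
      "sqrt \<bar>real_of_int n\<bar> \<le> sqrt 2 * sqrt (norm xi + 1)"
      using Lat_coordinates_bound[OF e] by (simp_all flip: real_sqrt_mult)
    then have "sqrt \<bar>real_of_int m\<bar> + sqrt \<bar>real_of_int n\<bar> \<le> (2 * sqrt 2) * sqrt (norm xi + 1)"
      by linarith
    also have "\<dots> \<le> 3 * sqrt (norm xi + 1)"
      by (rule mult_right_mono, rule power2_le_imp_le) (auto simp: power_mult_distrib)
    finally show ?thesis .
  qed
  then have "(sqrt \<bar>real_of_int m\<bar> + sqrt \<bar>real_of_int n\<bar>) * sqrt (normD2 u)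
      \<le> 3 * sqrt (norm xi + 1) * sqrt (normD2 u)"
    by (rule mult_right_mono) (simp add: normD2_nonneg)
  ultimately show ?thesis
    by (simp add: distrib_right)

qed

section \<open>The annular average of the interpolant\<close>

lemma cell_vertex_norm_le:
  fixes x p q r :: complex
  assumes "\<alpha> \<ge> 0" "\<beta> \<ge> 0" "\<gamma> \<ge> 0" "\<alpha> + \<beta> + \<gamma> = 1"
    and x: "x = of_real \<alpha> * p + of_real \<beta> * q + of_real \<gamma> * r"
    and "dist p q = 1" "dist p r = 1"
  shows "norm p \<le> norm x + 1"
proof -
  have \<alpha>: "\<alpha> = 1 - \<beta> - \<gamma>"
    using assms(4) by simp
  have "x - p = of_real \<beta> * (q - p) + of_real \<gamma> * (r - p)"
    unfolding x \<alpha> by (simp add: algebra_simps)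
  then have "norm (x - p) \<le> \<beta> + \<gamma>"
    using assms norm_triangle_ineq[of "of_real \<beta> * (q - p)" "of_real \<gamma> * (r - p)"]
    by (simp add: norm_mult dist_norm norm_minus_commute)
  then show ?thesis
    using assms(1,4) norm_triangle_ineq4[of x "x - p"] by simp
qed

lemma interp_cases:
  obtains (cell) p q r \<alpha> \<beta> \<gamma> where "is_cell p q r" "\<alpha> \<ge> 0" "\<beta> \<ge> 0" "\<gamma> \<ge> 0"
      "\<alpha> + \<beta> + \<gamma> = 1" "x = of_real \<alpha> * p + of_real \<beta> * q + of_real \<gamma> * r"
      "interp u x = \<alpha> * u p + \<beta> * u q + \<gamma> * u r"
  | (uncovered) "interp u x = (SOME v::real. False)"
proof (cases "\<exists>p q r \<alpha> \<beta> \<gamma>. is_cell p q r \<and> \<alpha> \<ge> 0 \<and> \<beta> \<ge> 0 \<and> \<gamma> \<ge> 0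
     \<and> \<alpha> + \<beta> + \<gamma> = 1 \<and> x = of_real \<alpha> * p + of_real \<beta> * q + of_real \<gamma> * r")
  case True
  then have "\<exists>val p q r \<alpha> \<beta> \<gamma>. is_cell p q r \<and> \<alpha> \<ge> 0 \<and> \<beta> \<ge> 0 \<and> \<gamma> \<ge> 0
     \<and> \<alpha> + \<beta> + \<gamma> = 1 \<and> x = of_real \<alpha> * p + of_real \<beta> * q + of_real \<gamma> * r
     \<and> val = \<alpha> * u p + \<beta> * u q + \<gamma> * u r"
    by blast
  from someI_ex[OF this] obtain p q r \<alpha> \<beta> \<gamma> where "is_cell p q r" "\<alpha> \<ge> 0" "\<beta> \<ge> 0" "\<gamma> \<ge> 0"
      "\<alpha> + \<beta> + \<gamma> = 1" "x = of_real \<alpha> * p + of_real \<beta> * q + of_real \<gamma> * r"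
      "interp u x = \<alpha> * u p + \<beta> * u q + \<gamma> * u r"
    unfolding interp_def by blast
  then show ?thesis
    by (rule cell)
next
  case False
  then have "interp u x = (SOME v::real. False)"
    unfolding interp_def by (intro arg_cong[where f = Eps] ext) blast
  then show ?thesis
    by (rule uncovered)
qed

lemma abs_convex_combination_le:
  fixes a b c :: real
  assumes "\<alpha> \<ge> 0" "\<beta> \<ge> 0" "\<gamma> \<ge> 0" "\<alpha> + \<beta> + \<gamma> = 1"
    and "\<bar>a\<bar> \<le> M" "\<bar>b\<bar> \<le> M" "\<bar>c\<bar> \<le> M"
  shows "\<bar>\<alpha> * a + \<beta> * b + \<gamma> * c\<bar> \<le> M"
proof -
  have "\<bar>\<alpha> * a + \<beta> * b + \<gamma> * c\<bar> \<le> \<alpha> * \<bar>a\<bar> + \<beta> * \<bar>b\<bar> + \<gamma> * \<bar>c\<bar>"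
    using assms(1-3) abs_triangle_ineq[of "\<alpha> * a + \<beta> * b" "\<gamma> * c"]
      abs_triangle_ineq[of "\<alpha> * a" "\<beta> * b"]
    by (simp add: abs_mult)
  also have "\<dots> \<le> \<alpha> * M + \<beta> * M + \<gamma> * M"
    using assms by (intro add_mono mult_left_mono) auto
  also have "\<dots> = M"
    using assms(4) by (metis distrib_right mult_1)
  finally show ?thesis .
qed

lemma interp_growth_bound:
  assumes sum: "(\<lambda>b. (Dif u b)\<^sup>2) summable_on Bonds"
  obtains C where "C \<ge> \<bar>u Lat_origin\<bar>"
    "\<And>x. \<bar>interp u x\<bar> \<le> C + 3 * sqrt (norm x + 2) * sqrt (normD2 u)"
proof
  define C where "C = \<bar>SOME v::real. False\<bar> + \<bar>u Lat_origin\<bar>"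
    \<comment> \<open>absorbs the unspecified value of \<^const>\<open>interp\<close> off the cells\<close>
  show "C \<ge> \<bar>u Lat_origin\<bar>"
    by (simp add: C_def)
  fix x :: complex
  define M where "M = C + 3 * sqrt (norm x + 2) * sqrt (normD2 u)"
  have vertex: "\<bar>u p\<bar> \<le> M" if "p \<in> Lat" "norm p \<le> norm x + 1" for p
  proof -
    have "\<bar>u p - u Lat_origin\<bar> \<le> 3 * sqrt (norm p + 1) * sqrt (normD2 u)"
      by (rule Lat_growth_estimate[OF sum that(1)])
    also have "\<dots> \<le> 3 * sqrt (norm x + 2) * sqrt (normD2 u)"
      using that(2) by (intro mult_right_mono) (auto simp: normD2_nonneg)
    finally show ?thesis
      unfolding M_def C_def by linarith
  qed
  show "\<bar>interp u x\<bar> \<le> M"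
  proof (cases x u rule: interp_cases)
    case (cell p q r \<alpha> \<beta> \<gamma>)
    have L: "p \<in> Lat" "q \<in> Lat" "r \<in> Lat" and d: "dist p q = 1" "dist q r = 1" "dist p r = 1"
      using cell(1) unfolding is_cell_def by auto
    have "norm p \<le> norm x + 1" "norm q \<le> norm x + 1" "norm r \<le> norm x + 1"
      using cell_vertex_norm_le[OF cell(2-6) d(1,3)]
        cell_vertex_norm_le[of \<beta> \<gamma> \<alpha> x q r p] cell_vertex_norm_le[of \<gamma> \<alpha> \<beta> x r p q]
        cell d by (auto simp: dist_commute algebra_simps)
    then have "\<bar>u p\<bar> \<le> M" "\<bar>u q\<bar> \<le> M" "\<bar>u r\<bar> \<le> M"
      using vertex L by auto
    then show ?thesis
      unfolding cell(7) by (rule abs_convex_combination_le[OF cell(2-5)])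
  next
    case uncovered
    then show ?thesis
      unfolding M_def C_def using normD2_nonneg by auto
  qed
qed

lemma abs_average_le:
  fixes f :: "'a::euclidean_space \<Rightarrow> real"
  assumes S: "S \<in> sets lborel" "S \<in> lmeasurable"
    and bound: "\<And>x. x \<in> S \<Longrightarrow> \<bar>f x\<bar> \<le> M" and "M \<ge> 0"
  shows "\<bar>integral S f / Henstock_Kurzweil_Integration.content S\<bar> \<le> M"
proof -
  have content: "Henstock_Kurzweil_Integration.content S = integral S (\<lambda>x. 1)"
    using lmeasure_integral[OF S(2)] measure_completion[OF S(1)] by simp
  have "\<bar>integral S f\<bar> \<le> M * Henstock_Kurzweil_Integration.content S"
  proof (cases "f integrable_on S")
    case True
    have "norm (integral S f) \<le> integral S (\<lambda>x. M)"
      by (rule integral_norm_bound_integral[OF True integrable_on_const[OF S(2)]])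
        (use bound in auto)
    then show ?thesis
      using integral_mult[OF integrable_on_const[OF S(2)], of M 1] content by simp
  qed (use \<open>M \<ge> 0\<close> in \<open>simp add: not_integrable_integral\<close>)
  then show ?thesis
    using \<open>M \<ge> 0\<close> by (cases "Henstock_Kurzweil_Integration.content S = 0")
      (auto simp: abs_div divide_le_eq)
qed

lemma avgR_deviation_bound:
  assumes sum: "(\<lambda>b. (Dif u b)\<^sup>2) summable_on Bonds"
  obtains C where "C \<ge> 0"
    "\<And>R xi. R > 0 \<Longrightarrow> xi \<in> Lat \<Longrightarrow> norm xi \<le> R + 1 \<Longrightarrow>
       \<bar>u xi - avgR R u\<bar> \<le> C + 6 * sqrt (R + 2) * sqrt (normD2 u)"
proof -
  obtain C where C: "C \<ge> \<bar>u Lat_origin\<bar>"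
    and interp: "\<And>x. \<bar>interp u x\<bar> \<le> C + 3 * sqrt (norm x + 2) * sqrt (normD2 u)"
    using interp_growth_bound[OF sum] by blast
  show ?thesis
  proof (rule that[of "2 * C"])
    show "2 * C \<ge> 0"
      using C by linarith
    fix R xi assume R: "R > 0" and xi: "xi \<in> Lat" "norm xi \<le> R + 1"
    let ?M = "C + 3 * sqrt (R + 2) * sqrt (normD2 u)"
    have "\<bar>interp u x\<bar> \<le> ?M" if "x \<in> annulus R" for x
    proof -
      have "norm x < R"
        using that by (simp add: annulus_def)
      then have "sqrt (norm x + 2) * sqrt (normD2 u) \<le> sqrt (R + 2) * sqrt (normD2 u)"
        by (intro mult_right_mono) (auto simp: normD2_nonneg)
      then show ?thesis
        using interp[of x] by linarith
    qed
    then have "\<bar>avgR R u\<bar> \<le> ?M"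
      unfolding avgR_def
      by (intro abs_average_le) (use C R in \<open>auto simp: annulus_def normD2_nonneg intro: fmeasurable_Diff\<close>)
    moreover have "\<bar>u xi - u Lat_origin\<bar> \<le> 3 * sqrt (R + 2) * sqrt (normD2 u)"
      using Lat_growth_estimate[OF sum xi(1)] xi(2)
        mult_right_mono[of "3 * sqrt (norm xi + 1)" "3 * sqrt (R + 2)" "sqrt (normD2 u)"]
      by (simp add: normD2_nonneg)
    ultimately show "\<bar>u xi - avgR R u\<bar> \<le> 2 * C + 6 * sqrt (R + 2) * sqrt (normD2 u)"
      using C by linarith
  qed
qed

section \<open>Convergence of the truncated displacement\<close>

lemma cutoff_Lipschitz:
  assumes "cutoff \<eta>"
  obtains B where "B \<ge> 0"
    "\<And>x y. norm (x - y) \<le> 1/2 \<Longrightarrow> \<bar>\<eta> x - \<eta> y\<bar> \<le> B * norm (x - y)"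
    "\<And>x. \<bar>\<eta> x\<bar> \<le> 1 + B"
proof -
  obtain \<eta>' where d: "\<And>x. (\<eta> has_derivative blinfun_apply (\<eta>' x)) (at x)"
    and c: "continuous_on UNIV \<eta>'"
    and one: "\<And>x. norm x \<le> 3/4 \<Longrightarrow> \<eta> x = 1" and zero: "\<And>x. norm x \<ge> 1 \<Longrightarrow> \<eta> x = 0"
    using assms unfolding cutoff_def by blast
  have "compact (\<eta>' ` cball 0 2)"
    by (rule compact_continuous_image) (use c continuous_on_subset in auto)
  then obtain B where B: "B > 0" "\<And>x. x \<in> cball 0 2 \<Longrightarrow> norm (\<eta>' x) \<le> B"
    using compact_imp_bounded bounded_pos by (metis imageI)
  have lip_ball: "\<bar>\<eta> x - \<eta> y\<bar> \<le> B * norm (x - y)" if "x \<in> cball 0 2" "y \<in> cball 0 2" for x y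
    using differentiable_bound[of "cball 0 2" \<eta> "\<lambda>x. blinfun_apply (\<eta>' x)" B x y] that B d
    by (auto intro: has_derivative_at_withinI simp: norm_blinfun.rep_eq[symmetric])
  show ?thesis
  proof (rule that[of B])
    fix x y :: complex assume xy: "norm (x - y) \<le> 1/2"
    show "\<bar>\<eta> x - \<eta> y\<bar> \<le> B * norm (x - y)"
    proof (cases "x \<in> cball 0 2 \<and> y \<in> cball 0 2")
      case False
      then have "norm x \<ge> 1" "norm y \<ge> 1"
        using xy norm_triangle_ineq4[of x "x - y"] norm_triangle_ineq4[of y "y - x"]
        by (auto simp: norm_minus_commute)
      then show ?thesis
        using zero B by simp
    qed (use lip_ball in auto)
  next
    fix x :: complex
    show "\<bar>\<eta> x\<bar> \<le> 1 + B"
    proof (cases "norm x \<ge> 1")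
      case False
      then have "\<bar>\<eta> x - \<eta> 0\<bar> \<le> B * norm x"
        using lip_ball[of x 0] by simp
      also have "\<dots> \<le> B"
        using False B by (simp add: mult_left_le)
      finally have "\<bar>\<eta> x - \<eta> 0\<bar> \<le> B" .
      then show ?thesis
        using one[of 0] by simp
    qed (use zero B in simp)
  qed (use B in simp)
qed

lemma Dif_small_far_out:
  assumes sum: "(\<lambda>b. (Dif u b)\<^sup>2) summable_on Bonds" and "\<epsilon> > 0"
  obtains \<rho> where "\<And>b. b \<in> Bonds \<Longrightarrow> norm (snd b) > \<rho> \<Longrightarrow> \<bar>Dif u b\<bar> < \<epsilon>"
proof -
  define F where "F = {b \<in> Bonds. (Dif u b)\<^sup>2 \<ge> \<epsilon>\<^sup>2}"
  have "finite F"
  proof (rule ccontr)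
    assume "infinite F"
    define N where "N = nat \<lceil>normD2 u / \<epsilon>\<^sup>2\<rceil> + 1"
    obtain F' where F': "finite F'" "card F' = N" "F' \<subseteq> F"
      using infinite_arbitrarily_large[OF \<open>infinite F\<close>] by blast
    have "real N * \<epsilon>\<^sup>2 = (\<Sum>b\<in>F'. \<epsilon>\<^sup>2)"
      using F' by simp
    also have "\<dots> \<le> (\<Sum>b\<in>F'. (Dif u b)\<^sup>2)"
      using F' by (intro sum_mono) (auto simp: F_def)
    also have "\<dots> \<le> normD2 u"
      by (rule sum_Dif_sq_le_normD2[OF sum F'(1)]) (use F' in \<open>auto simp: F_def\<close>)
    finally have "real N \<le> normD2 u / \<epsilon>\<^sup>2"
      using \<open>\<epsilon> > 0\<close> by (simp add: le_divide_eq)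
    then show False
      unfolding N_def by linarith
  qed
  show ?thesis
  proof (rule that[of "\<Sum>b\<in>F. norm (snd b)"])
    fix b assume b: "b \<in> Bonds" "norm (snd b) > (\<Sum>b\<in>F. norm (snd b))"
    have "b \<notin> F"
      using b(2) member_le_sum[OF _ _ \<open>finite F\<close>, of b "\<lambda>b. norm (snd b)"] by auto
    then show "\<bar>Dif u b\<bar> < \<epsilon>"
      using b(1) \<open>\<epsilon> > 0\<close> power2_less_imp_less[of "\<bar>Dif u b\<bar>" \<epsilon>] by (simp add: F_def)
  qed
qed

lemma cutoff_scaled_far_bound:
  assumes eta: "cutoff \<eta>" and bound: "\<And>x. \<bar>\<eta> x\<bar> \<le> 1 + B" and "R > 0"
  shows "\<bar>\<eta> (z / of_real R) - 1\<bar> \<le> (if norm z > 3 * R / 4 then 2 + B else 0)"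
proof (cases "norm z > 3 * R / 4")
  case True
  then show ?thesis
    using bound[of "z / of_real R"] by simp
next
  case False
  then have "norm (z / of_real R) \<le> 3/4"
    using \<open>R > 0\<close> by (simp add: norm_divide divide_le_eq)
  then show ?thesis
    using eta False unfolding cutoff_def by simp
qed

lemma cutoff_scaled_bond_bound:
  assumes eta: "cutoff \<eta>"
    and lip: "\<And>x y. norm (x - y) \<le> 1/2 \<Longrightarrow> \<bar>\<eta> x - \<eta> y\<bar> \<le> B * norm (x - y)"
    and "R \<ge> 2" and dist: "dist xi ze = 1"
  shows "\<bar>\<eta> (ze / of_real R) - \<eta> (xi / of_real R)\<bar> \<le> (if norm xi \<le> R + 1 then B / R else 0)"
proof (cases "norm xi \<le> R + 1")
  case True
  have "norm (ze / of_real R - xi / of_real R) = 1 / R"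
    using dist \<open>R \<ge> 2\<close> by (simp add: dist_norm norm_divide norm_minus_commute flip: diff_divide_distrib)
  then show ?thesis
    using lip[of "ze / of_real R" "xi / of_real R"] True \<open>R \<ge> 2\<close> by simp
next
  case False
  then have "norm ze \<ge> R"
    using dist norm_triangle_ineq2[of xi ze] by (simp add: dist_norm)
  then have "norm (ze / of_real R) \<ge> 1" "norm (xi / of_real R) \<ge> 1"
    using False \<open>R \<ge> 2\<close> by (simp_all add: norm_divide le_divide_eq)
  then show ?thesis
    using eta False unfolding cutoff_def by simp
qed

lemma truncR_Dif_estimate:
  assumes sum: "(\<lambda>b. (Dif u b)\<^sup>2) summable_on Bonds" and eta: "cutoff \<eta>"
  obtains B C where "B \<ge> 0" "C \<ge> 0"
    "\<And>R b. R > 2 \<Longrightarrow> b \<in> Bonds \<Longrightarrow> \<bar>Dif (truncR \<eta> R u) b - Dif u b\<bar>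
       \<le> (if norm (snd b) > 3 * R / 4 then (2 + B) * \<bar>Dif u b\<bar> else 0)
          + B / R * (C + 6 * sqrt (R + 2) * sqrt (normD2 u))"
proof -
  obtain B where B: "B \<ge> 0"
    and lip: "\<And>x y. norm (x - y) \<le> 1/2 \<Longrightarrow> \<bar>\<eta> x - \<eta> y\<bar> \<le> B * norm (x - y)"
    and bound: "\<And>x. \<bar>\<eta> x\<bar> \<le> 1 + B"
    using cutoff_Lipschitz[OF eta] by blast
  obtain C where C: "C \<ge> 0" and dev: "\<And>R xi. R > 0 \<Longrightarrow> xi \<in> Lat \<Longrightarrow> norm xi \<le> R + 1 \<Longrightarrow>
       \<bar>u xi - avgR R u\<bar> \<le> C + 6 * sqrt (R + 2) * sqrt (normD2 u)"
    using avgR_deviation_bound[OF sum] by blast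
  show ?thesis
  proof (rule that[OF B C])
    fix R :: real and b assume R: "R > 2" and b: "b \<in> Bonds"
    obtain xi ze where b_eq: "b = (xi, ze)"
      by (cases b)
    have xi: "xi \<in> Lat" and dist: "dist xi ze = 1"
      using b by (auto simp: b_eq Bonds_def)
    let ?K = "C + 6 * sqrt (R + 2) * sqrt (normD2 u)"
    have "\<bar>Dif (truncR \<eta> R u) b - Dif u b\<bar>
      = \<bar>(\<eta> (ze / of_real R) - 1) * Dif u b + (\<eta> (ze / of_real R) - \<eta> (xi / of_real R)) * (u xi - avgR R u)\<bar>"
      by (simp add: b_eq Dif_def truncR_def algebra_simps)
    also have "\<dots> \<le> \<bar>(\<eta> (ze / of_real R) - 1) * Dif u b\<bar>
        + \<bar>(\<eta> (ze / of_real R) - \<eta> (xi / of_real R)) * (u xi - avgR R u)\<bar>"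
      by (rule abs_triangle_ineq)
    also have "\<bar>(\<eta> (ze / of_real R) - 1) * Dif u b\<bar>
        \<le> (if norm (snd b) > 3 * R / 4 then 2 + B else 0) * \<bar>Dif u b\<bar>"
      unfolding abs_mult b_eq snd_conv
      by (rule mult_right_mono[OF cutoff_scaled_far_bound[OF eta bound]]) (use R in auto)
    also have "\<bar>(\<eta> (ze / of_real R) - \<eta> (xi / of_real R)) * (u xi - avgR R u)\<bar> \<le> B / R * ?K"
    proof -
      have "\<bar>\<eta> (ze / of_real R) - \<eta> (xi / of_real R)\<bar> * \<bar>u xi - avgR R u\<bar>
          \<le> (if norm xi \<le> R + 1 then B / R else 0) * \<bar>u xi - avgR R u\<bar>"
        by (rule mult_right_mono[OF cutoff_scaled_bond_bound[OF eta lip _ dist]]) (use R in auto)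
      also have "\<dots> \<le> B / R * ?K"
      proof (cases "norm xi \<le> R + 1")
        case True
        have "B / R * \<bar>u xi - avgR R u\<bar> \<le> B / R * ?K"
          using dev[OF _ xi True] R B by (intro mult_left_mono) auto
        then show ?thesis
          using True by simp
      qed (use R B C in \<open>simp add: normD2_nonneg\<close>)
      finally show ?thesis
        by (simp add: abs_mult)
    qed
    also have "(if norm (snd b) > 3 * R / 4 then 2 + B else 0) * \<bar>Dif u b\<bar>
        = (if norm (snd b) > 3 * R / 4 then (2 + B) * \<bar>Dif u b\<bar> else 0)"
      by simp
    finally show "\<bar>Dif (truncR \<eta> R u) b - Dif u b\<bar>
       \<le> (if norm (snd b) > 3 * R / 4 then (2 + B) * \<bar>Dif u b\<bar> else 0) + B / R * ?K"
      by simp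
  qed
qed

lemma truncR_Dif_bounded:
  assumes sum: "(\<lambda>b. (Dif u b)\<^sup>2) summable_on Bonds" and eta: "cutoff \<eta>" and "R > 2"
  shows "\<exists>T. \<forall>b\<in>Bonds. \<bar>Dif (truncR \<eta> R u) b - Dif u b\<bar> \<le> T"
proof -
  obtain B C where B: "B \<ge> 0" and "C \<ge> 0" and est: "\<And>R b. R > 2 \<Longrightarrow> b \<in> Bonds \<Longrightarrow>
      \<bar>Dif (truncR \<eta> R u) b - Dif u b\<bar>
       \<le> (if norm (snd b) > 3 * R / 4 then (2 + B) * \<bar>Dif u b\<bar> else 0)
          + B / R * (C + 6 * sqrt (R + 2) * sqrt (normD2 u))"
    using truncR_Dif_estimate[OF sum eta] by metis
  have "\<bar>Dif (truncR \<eta> R u) b - Dif u b\<bar>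
      \<le> (2 + B) * sqrt (normD2 u) + B / R * (C + 6 * sqrt (R + 2) * sqrt (normD2 u))"
    if "b \<in> Bonds" for b
  proof -
    have "(2 + B) * \<bar>Dif u b\<bar> \<le> (2 + B) * sqrt (normD2 u)"
      using abs_Dif_le_sqrt_normD2[OF sum that] B by (intro mult_left_mono) auto
    moreover have "0 \<le> (2 + B) * sqrt (normD2 u)"
      using B normD2_nonneg[of u] by simp
    ultimately have "(if norm (snd b) > 3 * R / 4 then (2 + B) * \<bar>Dif u b\<bar> else 0)
        \<le> (2 + B) * sqrt (normD2 u)"
      by simp
    then show ?thesis
      using est[OF \<open>R > 2\<close> that] by linarith
  qed
  then show ?thesis
    by blast
qed

lemma truncR_Dif_uniform_tendsto:
  assumes sum: "(\<lambda>b. (Dif u b)\<^sup>2) summable_on Bonds" and eta: "cutoff \<eta>" and "\<epsilon> > 0"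
  shows "\<forall>\<^sub>F R in at_top. \<forall>b\<in>Bonds. \<bar>Dif (truncR \<eta> R u) b - Dif u b\<bar> < \<epsilon>"
proof -
  obtain B C where B: "B \<ge> 0" and "C \<ge> 0" and est: "\<And>R b. R > 2 \<Longrightarrow> b \<in> Bonds \<Longrightarrow>
      \<bar>Dif (truncR \<eta> R u) b - Dif u b\<bar>
       \<le> (if norm (snd b) > 3 * R / 4 then (2 + B) * \<bar>Dif u b\<bar> else 0)
          + B / R * (C + 6 * sqrt (R + 2) * sqrt (normD2 u))"
    using truncR_Dif_estimate[OF sum eta] by metis
  obtain \<rho> where \<rho>: "\<And>b. b \<in> Bonds \<Longrightarrow> norm (snd b) > \<rho> \<Longrightarrow> \<bar>Dif u b\<bar> < \<epsilon> / (2 * (2 + B))"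
    using Dif_small_far_out[OF sum, of "\<epsilon> / (2 * (2 + B))"] \<open>\<epsilon> > 0\<close> B by auto
  have "((\<lambda>R. (B * C) * (1 / R) + (6 * B * sqrt (normD2 u)) * (sqrt (R + 2) / R)) \<longlongrightarrow>
      (B * C) * 0 + (6 * B * sqrt (normD2 u)) * 0) at_top"
    by (intro tendsto_intros) real_asymp+
  then have "((\<lambda>R. B / R * (C + 6 * sqrt (R + 2) * sqrt (normD2 u))) \<longlongrightarrow> 0) at_top"
    by (simp add: algebra_simps add_divide_distrib)
  then have "\<forall>\<^sub>F R in at_top. B / R * (C + 6 * sqrt (R + 2) * sqrt (normD2 u)) < \<epsilon> / 2"
    using \<open>\<epsilon> > 0\<close> by (intro order_tendstoD(2)) auto
  moreover have "\<forall>\<^sub>F R in at_top. R > (2::real)"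
    by (rule eventually_gt_at_top)
  moreover have "\<forall>\<^sub>F R in at_top. 3 * R / 4 > \<rho>"
    by real_asymp
  ultimately show ?thesis
  proof eventually_elim
    case (elim R)
    have far: "(if norm (snd b) > 3 * R / 4 then (2 + B) * \<bar>Dif u b\<bar> else 0) < \<epsilon> / 2"
      if "b \<in> Bonds" for b
    proof (cases "norm (snd b) > 3 * R / 4")
      case True
      then have "\<bar>Dif u b\<bar> < \<epsilon> / (2 * (2 + B))"
        using \<rho>[OF that] elim(3) by linarith
      then have "(2 + B) * \<bar>Dif u b\<bar> < (2 + B) * (\<epsilon> / (2 * (2 + B)))"
        using B by (intro mult_strict_left_mono) auto
      also have "\<dots> = \<epsilon> / 2"
        using B by (simp add: field_simps)
      finally show ?thesis
        using True by simp
    qed (use \<open>\<epsilon> > 0\<close> in simp)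
    show ?case
    proof
      fix b assume b: "b \<in> Bonds"
      show "\<bar>Dif (truncR \<eta> R u) b - Dif u b\<bar> < \<epsilon>"
        using far[OF b] est[OF elim(2) b] elim(1) by linarith
    qed
  qed
qed

section \<open>Persistence of strong stability\<close>

lemma C_k_continuous_deriv:
  assumes "C_k k f" "j < k"
  shows "continuous_on UNIV ((deriv ^^ j) f)"
  using assms unfolding C_k_def
  by (intro continuous_at_imp_continuous_on) (auto intro: differentiable_imp_continuous_within)

lemma abs_Dif_yhat_le: "\<bar>Dif yhat b\<bar> \<le> 1"
proof -
  have "0 \<le> yhat x \<and> yhat x < 1" for x
    using Arg2pi[of x] pi_gt_zero unfolding yhat_def by (auto simp: divide_less_eq)
  then show ?thesis
    unfolding Dif_def by (smt (verit))
qed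

lemma hess_lower_bound_of_coefficients:
  assumes v: "v \<in> W0" and stab: "hess \<psi> y v v \<ge> lam * normD2 v"
    and coeff: "\<And>b. b \<in> Bonds \<Longrightarrow> (deriv ^^ 2) \<psi> (Dif y' b) \<ge> (deriv ^^ 2) \<psi> (Dif y b) - \<omega>"
  shows "hess \<psi> y' v v \<ge> (lam - \<omega>) * normD2 v"
proof -
  define S where "S = {b \<in> Bonds. Dif v b \<noteq> 0}"
  have "finite S"
    unfolding S_def by (rule finite_support_W0[OF v])
  have on_S: "infsum g Bonds = sum g S" if "\<And>b. b \<in> Bonds - S \<Longrightarrow> g b = 0" for g
  proof -
    have "infsum g Bonds = infsum g S"
      by (rule infsum_cong_neutral) (use that in \<open>auto simp: S_def\<close>)
    then show ?thesis
      using \<open>finite S\<close> by simp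
  qed
  have "hess \<psi> y' v v - hess \<psi> y v v
      = (\<Sum>b\<in>S. ((deriv ^^ 2) \<psi> (Dif y' b) - (deriv ^^ 2) \<psi> (Dif y b)) * (Dif v b)\<^sup>2)"
    unfolding hess_def by (subst (1 2) on_S)
      (auto simp: S_def algebra_simps power2_eq_square simp flip: sum_subtractf)
  also have "\<dots> \<ge> (\<Sum>b\<in>S. - \<omega> * (Dif v b)\<^sup>2)"
  proof (rule sum_mono)
    fix b assume "b \<in> S"
    then have "- \<omega> \<le> (deriv ^^ 2) \<psi> (Dif y' b) - (deriv ^^ 2) \<psi> (Dif y b)"
      using coeff[of b] by (simp add: S_def)
    then show "- \<omega> * (Dif v b)\<^sup>2 \<le> ((deriv ^^ 2) \<psi> (Dif y' b) - (deriv ^^ 2) \<psi> (Dif y b)) * (Dif v b)\<^sup>2"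
      by (rule mult_right_mono) simp
  qed
  also have "(\<Sum>b\<in>S. - \<omega> * (Dif v b)\<^sup>2) = - \<omega> * normD2 v"
    unfolding normD2_def by (subst on_S) (auto simp: S_def sum_distrib_left)
  finally show ?thesis
    using stab by (simp add: algebra_simps)
qed

lemma uniform_tendsto_continuous_comp:
  fixes f :: "real \<Rightarrow> real"
  assumes f: "continuous_on UNIV f" and c: "\<And>x. x \<in> X \<Longrightarrow> \<bar>c x\<bar> \<le> M"
    and a: "\<And>\<epsilon>. \<epsilon> > 0 \<Longrightarrow> \<forall>\<^sub>F R in F. \<forall>x\<in>X. \<bar>a R x - c x\<bar> < \<epsilon>"
    and "\<epsilon> > 0"
  shows "\<forall>\<^sub>F R in F. \<forall>x\<in>X. \<bar>f (a R x) - f (c x)\<bar> < \<epsilon>"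
proof -
  have "uniformly_continuous_on (cball 0 (M + 1)) f"
    by (rule compact_uniformly_continuous) (use f continuous_on_subset in auto)
  then obtain d where d: "d > 0" and close: "\<And>x x'. x \<in> cball 0 (M + 1) \<Longrightarrow>
      x' \<in> cball 0 (M + 1) \<Longrightarrow> dist x' x < d \<Longrightarrow> dist (f x') (f x) < \<epsilon>"
    unfolding uniformly_continuous_on_def using \<open>\<epsilon> > 0\<close> by metis
  have "0 < min d 1"
    using d by simp
  then have "\<forall>\<^sub>F R in F. \<forall>x\<in>X. \<bar>a R x - c x\<bar> < min d 1"
    by (rule a)
  then show ?thesis
  proof (rule eventually_mono)
    fix R assume R: "\<forall>x\<in>X. \<bar>a R x - c x\<bar> < min d 1"
    show "\<forall>x\<in>X. \<bar>f (a R x) - f (c x)\<bar> < \<epsilon>"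
      using close R c by (fastforce simp: dist_real_def)
  qed
qed

lemma uniformly_small_Sup_tendsto_0:
  fixes g :: "real \<Rightarrow> 'a \<Rightarrow> real"
  assumes bdd: "\<And>R. R > R\<^sub>0 \<Longrightarrow> bdd_above (g R ` X)"
    and small: "\<And>\<epsilon>. \<epsilon> > 0 \<Longrightarrow> \<forall>\<^sub>F R in at_top. \<forall>x\<in>X. g R x < \<epsilon>"
  shows "((\<lambda>R. Sup (insert 0 (g R ` X))) \<longlongrightarrow> 0) at_top"
proof (rule tendstoI)
  fix e :: real assume "e > 0"
  have "\<forall>\<^sub>F R in at_top. \<forall>x\<in>X. g R x < e / 2"
    using \<open>e > 0\<close> by (intro small) simp
  moreover have "\<forall>\<^sub>F R in at_top. R > R\<^sub>0"
    by (rule eventually_gt_at_top)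
  ultimately show "\<forall>\<^sub>F R in at_top. dist (Sup (insert 0 (g R ` X))) 0 < e"
  proof eventually_elim
    case (elim R)
    have "0 \<le> Sup (insert 0 (g R ` X))"
      using bdd[OF elim(2)] by (intro cSup_upper) auto
    moreover have "Sup (insert 0 (g R ` X)) \<le> e / 2"
      using elim(1) \<open>e > 0\<close> by (intro cSup_least) auto
    ultimately show ?case
      using \<open>e > 0\<close> by simp
  qed
qed

lemma strong_stability_persists:
  fixes y :: "complex \<Rightarrow> real" and y' :: "real \<Rightarrow> complex \<Rightarrow> real"
  assumes f: "continuous_on UNIV ((deriv ^^ 2) \<psi>)"
    and stab: "\<And>v. v \<in> W0 \<Longrightarrow> hess \<psi> y v v \<ge> lam * normD2 v"
    and y: "\<And>b. b \<in> Bonds \<Longrightarrow> \<bar>Dif y b\<bar> \<le> M"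
    and close_bounded: "\<And>R. R > R\<^sub>0 \<Longrightarrow> \<exists>T. \<forall>b\<in>Bonds. \<bar>Dif (y' R) b - Dif y b\<bar> \<le> T"
    and close_uniform: "\<And>\<epsilon>. \<epsilon> > 0 \<Longrightarrow> \<forall>\<^sub>F R in at_top. \<forall>b\<in>Bonds. \<bar>Dif (y' R) b - Dif y b\<bar> < \<epsilon>"
  shows "\<exists>lam' :: real \<Rightarrow> real.
           (\<forall>R>R\<^sub>0. \<forall>v\<in>W0. hess \<psi> (y' R) v v \<ge> lam' R * normD2 v) \<and> (lam' \<longlongrightarrow> lam) at_top"
proof -
  define gap where "gap R b = \<bar>(deriv ^^ 2) \<psi> (Dif (y' R) b) - (deriv ^^ 2) \<psi> (Dif y b)\<bar>" for R b
  define \<omega> where "\<omega> R = Sup (insert 0 (gap R ` Bonds))" for R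
    \<comment> \<open>the \<open>insert 0\<close> only guards against an empty set of bonds\<close>
  have bdd: "bdd_above (gap R ` Bonds)" if R: "R > R\<^sub>0" for R
  proof -
    obtain T where T: "\<forall>b\<in>Bonds. \<bar>Dif (y' R) b - Dif y b\<bar> \<le> T"
      using close_bounded[OF R] by blast
    have "compact ((deriv ^^ 2) \<psi> ` cball 0 (M + \<bar>T\<bar>))"
      by (rule compact_continuous_image) (use f continuous_on_subset in auto)
    then obtain K where K: "\<And>z. z \<in> cball 0 (M + \<bar>T\<bar>) \<Longrightarrow> \<bar>(deriv ^^ 2) \<psi> z\<bar> \<le> K"
      using compact_imp_bounded bounded_iff by (metis imageI real_norm_def)
    have "gap R b \<le> 2 * K" if "b \<in> Bonds" for b
      using K[of "Dif y b"] K[of "Dif (y' R) b"] y[OF that] T that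
      unfolding gap_def by (fastforce simp: abs_le_iff)
    then show ?thesis
      by (auto intro!: bdd_aboveI2)
  qed
  have "hess \<psi> (y' R) v v \<ge> (lam - \<omega> R) * normD2 v" if "R > R\<^sub>0" "v \<in> W0" for R v
  proof (rule hess_lower_bound_of_coefficients[OF that(2) stab[OF that(2)]])
    fix b assume "b \<in> Bonds"
    then have "gap R b \<le> \<omega> R"
      unfolding \<omega>_def using bdd[OF that(1)] by (intro cSup_upper) auto
    then show "(deriv ^^ 2) \<psi> (Dif (y' R) b) \<ge> (deriv ^^ 2) \<psi> (Dif y b) - \<omega> R"
      unfolding gap_def by linarith
  qed
  moreover have "((\<lambda>R. lam - \<omega> R) \<longlongrightarrow> lam - 0) at_top"
    unfolding \<omega>_def gap_def
    by (intro tendsto_intros uniformly_small_Sup_tendsto_0[OF bdd[unfolded gap_def]]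
        uniform_tendsto_continuous_comp[OF f y close_uniform])
  ultimately show ?thesis
    by (intro exI[of _ "\<lambda>R. lam - \<omega> R"]) auto
qed

theorem mainTheorem7:
  fixes \<psi> :: "real \<Rightarrow> real" and \<eta> :: "complex \<Rightarrow> real"
    and u :: "complex \<Rightarrow> real" and lam_d :: real
  assumes psi_C4: "C_k 4 \<psi>"
    and psi_periodic: "\<forall>x. \<psi> (x + 1) = \<psi> x"
    and psi_even: "\<forall>x. \<psi> (- x) = \<psi> x"
    and eta: "cutoff \<eta>"
    and lam_pos: "lam_d > 0"
    and u_W12: "u \<in> W12"
    and STAB: "strongly_stable \<psi> lam_d (\<lambda>x. yhat x + u x)"
  shows "\<exists>lam :: real \<Rightarrow> real.
           (\<forall>R>2. \<forall>v\<in>W0.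
              hess \<psi> (\<lambda>x. yhat x + truncR \<eta> R u x) v v \<ge> lam R * normD2 v)
         \<and> (lam \<longlongrightarrow> lam_d) at_top"
proof (rule strong_stability_persists[where y = "\<lambda>x. yhat x + u x"
      and y' = "\<lambda>R x. yhat x + truncR \<eta> R u x" and M = "1 + sqrt (normD2 u)"])
  have sum: "(\<lambda>b. (Dif u b)\<^sup>2) summable_on Bonds"
    using u_W12 by (simp add: W12_def)
  have Dif_diff: "Dif (\<lambda>x. yhat x + truncR \<eta> R u x) b - Dif (\<lambda>x. yhat x + u x) b
      = Dif (truncR \<eta> R u) b - Dif u b" for R b
    by (simp add: Dif_def)
  show "continuous_on UNIV ((deriv ^^ 2) \<psi>)"
    using C_k_continuous_deriv[OF psi_C4] by simp
  show "hess \<psi> (\<lambda>x. yhat x + u x) v v \<ge> lam_d * normD2 v" if "v \<in> W0" for v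
    using STAB that unfolding strongly_stable_def by blast
  show "\<bar>Dif (\<lambda>x. yhat x + u x) b\<bar> \<le> 1 + sqrt (normD2 u)" if "b \<in> Bonds" for b
    using abs_Dif_yhat_le[of b] abs_Dif_le_sqrt_normD2[OF sum that] by (simp add: Dif_def)
  show "\<exists>T. \<forall>b\<in>Bonds. \<bar>Dif (\<lambda>x. yhat x + truncR \<eta> R u x) b - Dif (\<lambda>x. yhat x + u x) b\<bar> \<le> T"
    if "R > 2" for R
    unfolding Dif_diff by (rule truncR_Dif_bounded[OF sum eta that])
  show "\<forall>\<^sub>F R in at_top. \<forall>b\<in>Bonds.
      \<bar>Dif (\<lambda>x. yhat x + truncR \<eta> R u x) b - Dif (\<lambda>x. yhat x + u x) b\<bar> < \<epsilon>" if "\<epsilon> > 0" for \<epsilon>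
    unfolding Dif_diff by (rule truncR_Dif_uniform_tendsto[OF sum eta that])
qed

end
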